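(* For $r>1$ the period function satisfies: (a) if $p<q$ and $q>0$: $\Theta\big(\frac{pq}{p-q},q,r^{\frac{q-p}{q}}\big)=\frac{q-p}{q}\Theta(p,q,r)$; (b) if $p<q$ and $p<0$: $\Theta\big(p,\frac{pq}{q-p},r^{\frac{p-q}{p}}\big)=\frac{p-q}{p}\Theta(p,q,r)$; (c) if $p<q$: $\Theta(-q,-p,r)=\Theta(p,q,r)$.
   Context: For $p<q$ and $r>1$ define $$\Theta(p,q,r)=\int_1^r\frac{dx}{\sqrt{\left(\frac{r^p-r^q}{r^p-1}+\frac{r^q-1}{r^p-1}x^p\right)^{2/q}-x^2}}\quad (p\ne0,\ q\ne0),$$ $$\Theta(0,q,r)=\int_1^r\frac{dx}{\sqrt{\left(1+\frac{r^q-1}{\log r}\log x\right)^{2/q}-x^2}},\qquad \Theta(p,0,r)=\int_1^r\frac{dx}{\sqrt{r^{\frac{2(x^p-1)}{r^p-1}}-x^2}}.$$ *)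

theory Defs
  imports "HOL-Analysis.Analysis"
begin

text \<open>The period function Theta(p,q,r), for p < q and r > 1. The integral over [1,r]
  is improper (the integrand blows up at the endpoints); it is rendered as the
  Henstock--Kurzweil integral over the closed interval (the integrand is nonnegative,
  so this agrees with the improper Riemann integral when that converges).\<close>

definition Theta :: "real \<Rightarrow> real \<Rightarrow> real \<Rightarrow> real" where
  "Theta p q r =
     (if p = 0 then
        integral {1..r} (\<lambda>x. 1 / sqrt ((1 + (r powr q - 1) / ln r * ln x) powr (2 / q) - x\<^sup>2))
      else if q = 0 then
        integral {1..r} (\<lambda>x. 1 / sqrt (r powr (2 * (x powr p - 1) / (r powr p - 1)) - x\<^sup>2))
      else
        integral {1..r} (\<lambda>x. 1 / sqrt (((r powr p - r powr q) / (r powr p - 1)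
                                         + (r powr q - 1) / (r powr p - 1) * x powr p) powr (2 / q) - x\<^sup>2)))"

end

theory Submission
  imports Defs
begin

text \<open>Let \<open>pmean r s w\<close> be the weighted \<open>s\<close>-power mean of \<open>1\<close> and \<open>r\<close> with weights
  \<open>1 - w\<close> and \<open>w\<close> (the geometric mean for \<open>s = 0\<close>). Then \<open>Theta p q r\<close> is the integral of
  \<open>1 / sqrt (F x\<^sup>2 - x\<^sup>2)\<close> over \<open>[1,r]\<close>, where \<open>F = pmean r q \<circ> (pmean r p)\<^sup>-\<^sup>1\<close> is an
  increasing bijection of \<open>[1,r]\<close>, and the strict power mean inequality gives \<open>x < F x\<close>
  inside.
  For (a), the substitution \<open>x \<mapsto> x powr c\<close> with \<open>c = (q - p) / q\<close> turns the map \<open>F\<close> of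
  the new parameters into \<open>F x * x powr (c - 1)\<close>, so the integral just scales by \<open>c\<close>.
  For (c), \<open>pmean r (-p) (1 - w) = r / pmean r p w\<close> shows that the map \<open>G\<close> of \<open>(-q, -p)\<close>
  satisfies \<open>G (r / F x) = r / x\<close>. Substituting \<open>u = r / F x\<close> turns \<open>Theta (-q) (-p) r\<close>
  into the integral of \<open>x F' x / (F x sqrt (F x\<^sup>2 - x\<^sup>2))\<close>, which differs from
  \<open>Theta p q r\<close> by the integral of the derivative of \<open>arcsin (x / F x)\<close>; that vanishes
  because \<open>F\<close> fixes \<open>1\<close> and \<open>r\<close>.
  Part (b) is (a) for \<open>(-q, -p)\<close> conjugated by (c).\<close>

section \<open>Elementary inequalities for real powers\<close>

lemma convex_comb_1_pos:
  fixes w a :: real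
  shows "0 \<le> w \<Longrightarrow> w \<le> 1 \<Longrightarrow> 0 < a \<Longrightarrow> 0 < 1 - w + w * a"
  by (cases "w = 1") (auto intro: add_pos_nonneg)

lemma mult_powr_minus_one_pos:
  fixes r p :: real
  assumes "1 < r" "p \<noteq> 0"
  shows "0 < p * (r powr p - 1)"
  using assms by (cases "0 < p") (auto intro!: mult_neg_neg simp: powr_less_one)

lemma ln_less_minus_one: "0 < (x::real) \<Longrightarrow> x \<noteq> 1 \<Longrightarrow> ln x < x - 1"
  using ln_le_minus_one[of x] ln_eq_minus_one[of x] by (auto simp: order_le_less)

lemma powr_less_one_plus:
  fixes t z :: real
  assumes "0 < t" "t \<noteq> 1" "0 < z" "z < 1"
  shows "t powr z < 1 + z * (t - 1)"
proof -
  define m where "m = 1 + z * (t - 1)"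
  have "m = (1 - z) + z * t" "m - t = (1 - z) * (1 - t)" "m - 1 = z * (t - 1)"
    by (simp_all add: m_def algebra_simps)
  then have m: "0 < m" "t / m \<noteq> 1" "1 / m \<noteq> 1"
    using assms by (auto intro!: add_pos_pos)
  \<comment> \<open>the tangent of \<open>ln\<close> at \<open>m\<close> lies strictly above \<open>ln\<close> at \<open>t\<close> and at \<open>1\<close>\<close>
  have "z * ln (t / m) + (1 - z) * ln (1 / m) < z * (t / m - 1) + (1 - z) * (1 / m - 1)"
    using m assms by (intro add_strict_mono mult_strict_left_mono ln_less_minus_one) auto
  also have "\<dots> = 0"
    using m by (simp add: m_def field_simps)
  finally have "ln (t powr z) < ln m"
    using m assms by (simp add: ln_div ln_powr algebra_simps)
  then have "t powr z < m"
    using m(1) assms by (subst (asm) ln_less_cancel_iff) auto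
  then show ?thesis
    by (simp add: m_def)
qed

lemma one_plus_less_powr:
  fixes t z :: real
  assumes "0 < t" "t \<noteq> 1" "z < 0 \<or> 1 < z"
  shows "1 + z * (t - 1) < t powr z"
  using assms(3)
proof
  assume "1 < z"
  have "(t powr z) powr (1 / z) < 1 + 1 / z * (t powr z - 1)"
    using assms \<open>1 < z\<close> by (intro powr_less_one_plus) (auto simp: powr_eq_one_iff_gen)
  then show ?thesis
    using assms \<open>1 < z\<close> by (simp add: powr_powr field_simps)
next
  assume "z < 0"
  \<comment> \<open>AM-GM for \<open>t powr z\<close> and \<open>t\<close> with weights \<open>1 / (1 - z)\<close> and \<open>- z / (1 - z)\<close>,
    whose weighted geometric mean is \<open>t powr 0 = 1\<close>\<close>
  have "(t powr (z - 1)) powr (1 / (1 - z)) < 1 + 1 / (1 - z) * (t powr (z - 1) - 1)"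
    using assms \<open>z < 0\<close> by (intro powr_less_one_plus) (auto simp: powr_eq_one_iff_gen)
  moreover have "(t powr (z - 1)) powr (1 / (1 - z)) = 1 / t"
  proof -
    have "(z - 1) * (1 / (1 - z)) = -1"
      using \<open>z < 0\<close> by (simp add: field_simps)
    then show ?thesis
      using assms by (simp add: powr_powr powr_minus_divide)
  qed
  ultimately have "(1 - z) * t * (1 / t) < (1 - z) * t * (1 + 1 / (1 - z) * (t powr (z - 1) - 1))"
    using assms \<open>z < 0\<close> by (intro mult_strict_left_mono) auto
  also have "\<dots> = (1 - z) * t + t * t powr (z - 1) - t"
    using \<open>z < 0\<close> by (simp add: field_simps)
  also have "t * t powr (z - 1) = t powr z"
    using assms by (simp add: powr_diff)
  finally show ?thesis
    using assms by (simp add: algebra_simps)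
qed

lemma powr_convex_comb_less:
  fixes z w a :: real
  assumes "z < 0 \<or> 1 < z" "0 < w" "w < 1" "0 < a" "a \<noteq> 1"
  shows "(1 - w + w * a) powr z < 1 - w + w * a powr z"
proof -
  define m where "m = 1 - w + w * a"
  have "m - 1 = w * (a - 1)" "m - a = (1 - w) * (1 - a)"
    by (simp_all add: m_def algebra_simps)
  then have "m - 1 \<noteq> 0" "m - a \<noteq> 0"
    using assms by simp_all
  moreover have "0 < m"
    using assms by (simp add: m_def convex_comb_1_pos)
  ultimately have m: "0 < m" "1 / m \<noteq> 1" "a / m \<noteq> 1"
    by (auto simp: field_simps)
  have "(1 - w) * (1 + z * (1 / m - 1)) + w * (1 + z * (a / m - 1)) = 1 + z * ((1 - w + w * a) / m - 1)"
    using m by (simp add: field_simps)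
  then have "1 = (1 - w) * (1 + z * (1 / m - 1)) + w * (1 + z * (a / m - 1))"
    using m by (simp add: m_def[symmetric])
  also have "\<dots> < (1 - w) * (1 / m) powr z + w * (a / m) powr z"
    \<comment> \<open>the tangent of \<open>s powr z\<close> at \<open>m\<close> lies strictly below it at \<open>1\<close> and at \<open>a\<close>\<close>
    using m assms by (intro add_strict_mono mult_strict_left_mono one_plus_less_powr) auto
  also have "\<dots> = (1 - w + w * a powr z) / m powr z"
    using m assms by (simp add: powr_divide field_simps)
  finally show ?thesis
    using m by (simp add: m_def pos_less_divide_eq)
qed

lemma powr_convex_comb_greater:
  fixes z w a :: real
  assumes "0 < z" "z < 1" "0 < w" "w < 1" "0 < a" "a \<noteq> 1"
  shows "1 - w + w * a powr z < (1 - w + w * a) powr z"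
proof -
  define m where "m = 1 - w + w * a"
  have "m - 1 = w * (a - 1)" "m - a = (1 - w) * (1 - a)"
    by (simp_all add: m_def algebra_simps)
  then have "m - 1 \<noteq> 0" "m - a \<noteq> 0"
    using assms by simp_all
  moreover have "0 < m"
    using assms by (simp add: m_def convex_comb_1_pos)
  ultimately have m: "0 < m" "1 / m \<noteq> 1" "a / m \<noteq> 1"
    by (auto simp: field_simps)
  have "(1 - w + w * a powr z) / m powr z = (1 - w) * (1 / m) powr z + w * (a / m) powr z"
    using m assms by (simp add: powr_divide field_simps)
  also have "\<dots> < (1 - w) * (1 + z * (1 / m - 1)) + w * (1 + z * (a / m - 1))"
    using m assms by (intro add_strict_mono mult_strict_left_mono powr_less_one_plus) auto
  also have "\<dots> = 1 + z * ((1 - w + w * a) / m - 1)"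
    using m by (simp add: field_simps)
  also have "\<dots> = 1"
    using m by (simp add: m_def[symmetric])
  finally show ?thesis
    using m by (simp add: m_def divide_less_eq)
qed

section \<open>Weighted power means of 1 and r\<close>

definition pmean :: "real \<Rightarrow> real \<Rightarrow> real \<Rightarrow> real" where
  "pmean r p w = (if p = 0 then r powr w else (1 - w + w * r powr p) powr (1 / p))"

definition pmean_inv :: "real \<Rightarrow> real \<Rightarrow> real \<Rightarrow> real" where
  "pmean_inv r p x = (if p = 0 then ln x / ln r else (x powr p - 1) / (r powr p - 1))"

lemma pmean_has_pos_derivative:
  assumes "1 < r" "0 \<le> w" "w \<le> 1"
  shows "\<exists>D>0. (pmean r p has_real_derivative D) (at w)"
proof (cases "p = 0")
  case True
  then have eq: "pmean r p = (\<lambda>w. r powr w)"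
    by (simp add: pmean_def fun_eq_iff)
  have "(pmean r p has_real_derivative r powr w * ln r) (at w)"
    unfolding eq using assms by (auto intro!: derivative_eq_intros)
  moreover have "0 < r powr w * ln r"
    using assms by simp
  ultimately show ?thesis
    by blast
next
  case False
  define B where "B = 1 - w + w * r powr p"
  have "0 < B"
    using assms by (simp add: B_def convex_comb_1_pos)
  have eq: "pmean r p = (\<lambda>w. (1 - w + w * r powr p) powr (1 / p))"
    using False by (simp add: pmean_def fun_eq_iff)
  have "(pmean r p has_real_derivative B powr (1 / p - 1) * (p * (r powr p - 1) / p\<^sup>2)) (at w)"
    unfolding eq using \<open>0 < B\<close> False
    by (auto intro!: derivative_eq_intros simp: B_def power2_eq_square)
  moreover have "0 < B powr (1 / p - 1) * (p * (r powr p - 1) / p\<^sup>2)"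
    using \<open>0 < B\<close> False mult_powr_minus_one_pos[OF assms(1) False] by simp
  ultimately show ?thesis
    by blast
qed

lemma pmean_inv_has_pos_derivative:
  assumes "1 < r" "0 < x"
  shows "\<exists>D>0. (pmean_inv r p has_real_derivative D) (at x)"
proof (cases "p = 0")
  case True
  then have eq: "pmean_inv r p = (\<lambda>x. ln x / ln r)"
    by (simp add: pmean_inv_def fun_eq_iff)
  have "(pmean_inv r p has_real_derivative 1 / (x * ln r)) (at x)"
    unfolding eq using assms by (auto intro!: derivative_eq_intros)
  moreover have "0 < 1 / (x * ln r)"
    using assms by simp
  ultimately show ?thesis
    by blast
next
  case False
  have eq: "pmean_inv r p = (\<lambda>x. (x powr p - 1) / (r powr p - 1))"
    using False by (simp add: pmean_inv_def fun_eq_iff)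
  have "(pmean_inv r p has_real_derivative
      x powr (p - 1) * (p * (r powr p - 1)) / (r powr p - 1)\<^sup>2) (at x)"
    unfolding eq using assms mult_powr_minus_one_pos[OF assms(1) False]
    by (auto intro!: derivative_eq_intros simp: power2_eq_square)
  moreover have "0 < x powr (p - 1) * (p * (r powr p - 1)) / (r powr p - 1)\<^sup>2"
  proof -
    have "0 < p * (r powr p - 1)"
      using mult_powr_minus_one_pos[OF assms(1) False] .
    then have "r powr p - 1 \<noteq> 0"
      by auto
    with \<open>0 < p * (r powr p - 1)\<close> show ?thesis
      using assms by (intro divide_pos_pos) simp_all
  qed
  ultimately show ?thesis
    by blast
qed

lemma pmean_0: "1 < r \<Longrightarrow> pmean r p 0 = 1"
  by (simp add: pmean_def)

lemma pmean_1: "1 < r \<Longrightarrow> pmean r p 1 = r"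
  by (simp add: pmean_def powr_powr)

lemma pmean_inv_1: "pmean_inv r p 1 = 0"
  by (simp add: pmean_inv_def)

lemma pmean_inv_self: "1 < r \<Longrightarrow> pmean_inv r p r = 1"
  using mult_powr_minus_one_pos[of r p] by (auto simp: pmean_inv_def)

lemma pmean_inv_pmean:
  assumes "1 < r" "0 \<le> w" "w \<le> 1"
  shows "pmean_inv r p (pmean r p w) = w"
proof (cases "p = 0")
  case True
  then show ?thesis
    using assms by (simp add: pmean_inv_def pmean_def ln_powr)
next
  case False
  have "0 < 1 - w + w * r powr p"
    using assms by (simp add: convex_comb_1_pos)
  moreover have "r powr p - 1 \<noteq> 0"
    using mult_powr_minus_one_pos[OF assms(1) False] by auto
  ultimately show ?thesis
    using False by (simp add: pmean_inv_def pmean_def powr_powr field_simps)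
qed

lemma powr_eq_pmean_inv:
  assumes "1 < r" "p \<noteq> 0"
  shows "x powr p = 1 - pmean_inv r p x + pmean_inv r p x * r powr p"
proof -
  have "r powr p - 1 \<noteq> 0"
    using mult_powr_minus_one_pos[OF assms] by auto
  then have "pmean_inv r p x * (r powr p - 1) = x powr p - 1"
    using assms by (simp add: pmean_inv_def)
  then show ?thesis
    by (simp add: algebra_simps)
qed

lemma pmean_pmean_inv:
  assumes "1 < r" "0 < x"
  shows "pmean r p (pmean_inv r p x) = x"
proof (cases "p = 0")
  case True
  then show ?thesis
    using assms by (simp add: pmean_inv_def pmean_def powr_def)
next
  case False
  then show ?thesis
    using assms by (simp add: pmean_def powr_powr flip: powr_eq_pmean_inv)
qed

lemma pmean_strict_mono:
  assumes "1 < r"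
  shows "strict_mono_on {0..1} (pmean r p)"
proof (rule strict_mono_onI)
  fix a b :: real
  assume "a \<in> {0..1}" "b \<in> {0..1}" "a < b"
  show "pmean r p a < pmean r p b"
  proof (rule DERIV_pos_imp_increasing[OF \<open>a < b\<close>])
    fix x
    assume "a \<le> x" "x \<le> b"
    then show "\<exists>y. (pmean r p has_real_derivative y) (at x) \<and> 0 < y"
      using pmean_has_pos_derivative[OF assms, of x p] \<open>a \<in> {0..1}\<close> \<open>b \<in> {0..1}\<close> by auto
  qed
qed

lemma pmean_inv_strict_mono:
  assumes "1 < r"
  shows "strict_mono_on {0<..} (pmean_inv r p)"
proof (rule strict_mono_onI)
  fix a b :: real
  assume "a \<in> {0<..}" "b \<in> {0<..}" "a < b"
  show "pmean_inv r p a < pmean_inv r p b"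
  proof (rule DERIV_pos_imp_increasing[OF \<open>a < b\<close>])
    fix x
    assume "a \<le> x" "x \<le> b"
    then show "\<exists>y. (pmean_inv r p has_real_derivative y) (at x) \<and> 0 < y"
      using pmean_inv_has_pos_derivative[OF assms, of x p] \<open>a \<in> {0<..}\<close> \<open>b \<in> {0<..}\<close> by auto
  qed
qed

lemma geometric_mean_less_pmean:
  assumes "1 < r" "0 < q" "0 < w" "w < 1"
  shows "r powr w < pmean r q w"
proof -
  have "(r powr q) powr w < 1 - w + w * r powr q"
    using assms powr_less_one_plus[of "r powr q" w] by (simp add: algebra_simps)
  then have "((r powr q) powr w) powr (1 / q) < (1 - w + w * r powr q) powr (1 / q)"
    using assms by (intro powr_less_mono2) auto
  then show ?thesis
    using assms by (simp add: pmean_def powr_powr)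
qed

lemma pmean_less_geometric_mean:
  assumes "1 < r" "p < 0" "0 < w" "w < 1"
  shows "pmean r p w < r powr w"
proof -
  have "(r powr p) powr w < 1 - w + w * r powr p"
    using assms powr_less_one_plus[of "r powr p" w] by (simp add: algebra_simps)
  then have "(1 - w + w * r powr p) powr (1 / p) < ((r powr p) powr w) powr (1 / p)"
    using assms by (intro powr_less_mono2_neg) auto
  then show ?thesis
    using assms by (simp add: pmean_def powr_powr)
qed

lemma pmean_less_pmean:
  assumes "1 < r" "p < q" "0 < w" "w < 1"
  shows "pmean r p w < pmean r q w"
proof -
  consider "p = 0" | "q = 0" | "p \<noteq> 0" "0 < q" | "p \<noteq> 0" "q < 0"
    by linarith
  then show ?thesis
  proof cases
    case 1
    then show ?thesis
      using assms geometric_mean_less_pmean[of r q w] by (simp add: pmean_def)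
  next
    case 2
    then show ?thesis
      using assms pmean_less_geometric_mean[of r p w] by (simp add: pmean_def)
  next
    case 3
    define a where "a = r powr p"
    have "q / p < 0 \<or> 1 < q / p"
      using assms 3 by (cases "0 < p") (auto simp: field_simps divide_pos_neg)
    then have "(1 - w + w * a) powr (q / p) < 1 - w + w * a powr (q / p)"
      using assms 3 by (intro powr_convex_comb_less) (auto simp: a_def)
    then have "((1 - w + w * a) powr (q / p)) powr (1 / q) < (1 - w + w * a powr (q / p)) powr (1 / q)"
      using 3 by (intro powr_less_mono2) auto
    then show ?thesis
      using 3 by (simp add: pmean_def a_def powr_powr)
  next
    case 4
    define a where "a = r powr p"
    have "0 < q / p" "q / p < 1"
      using assms 4 by (simp_all add: field_simps divide_neg_neg)
    then have "1 - w + w * a powr (q / p) < (1 - w + w * a) powr (q / p)"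
      using assms 4 by (intro powr_convex_comb_greater) (auto simp: a_def)
    then have "((1 - w + w * a) powr (q / p)) powr (1 / q) < (1 - w + w * a powr (q / p)) powr (1 / q)"
      using assms 4 convex_comb_1_pos[of w "a powr (q / p)"]
      by (intro powr_less_mono2_neg) (auto simp: a_def)
    then show ?thesis
      using 4 by (simp add: pmean_def a_def powr_powr)
  qed
qed

lemma pmean_neg:
  assumes "1 < r" "0 \<le> w" "w \<le> 1"
  shows "pmean r (- p) (1 - w) = r / pmean r p w"
proof (cases "p = 0")
  case True
  then show ?thesis
    using assms by (simp add: pmean_def powr_diff)
next
  case False
  define B where "B = 1 - w + w * r powr p"
  have "0 < B"
    using assms by (simp add: B_def convex_comb_1_pos)
  have "w + (1 - w) * r powr (- p) = r powr (- p) * B"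
    using assms by (simp add: B_def algebra_simps powr_minus)
  then have "pmean r (- p) (1 - w) = (r powr (- p) * B) powr (- (1 / p))"
    using False by (simp add: pmean_def)
  also have "\<dots> = (r powr (- p)) powr (- (1 / p)) * B powr (- (1 / p))"
    using assms \<open>0 < B\<close> by (simp add: powr_mult)
  also have "\<dots> = r / B powr (1 / p)"
  proof -
    have "(r powr (- p)) powr (- (1 / p)) = r"
      using False assms by (simp add: powr_powr)
    moreover have "B powr (- (1 / p)) = 1 / B powr (1 / p)"
      by (simp add: powr_minus divide_inverse)
    ultimately show ?thesis
      by simp
  qed
  finally show ?thesis
    using False by (simp add: pmean_def B_def)
qed

lemma pmean_inv_neg:
  assumes "1 < r" "0 \<le> w" "w \<le> 1"
  shows "pmean_inv r (- p) (r / pmean r p w) = 1 - w"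
  using assms pmean_inv_pmean[of r "1 - w" "- p"] by (simp add: pmean_neg)

lemma pmean_mem_atLeastAtMost:
  assumes "1 < r" "w \<in> {0..1}"
  shows "pmean r p w \<in> {1..r}"
  using assms strict_mono_on_leD[OF pmean_strict_mono[OF assms(1)], of 0 w p]
    strict_mono_on_leD[OF pmean_strict_mono[OF assms(1)], of w 1 p]
  by (simp add: pmean_0 pmean_1)

lemma pmean_inv_mem_atLeastAtMost:
  assumes "1 < r" "x \<in> {1..r}"
  shows "pmean_inv r p x \<in> {0..1}"
  using assms strict_mono_on_leD[OF pmean_inv_strict_mono[OF assms(1)], of 1 x p]
    strict_mono_on_leD[OF pmean_inv_strict_mono[OF assms(1)], of x r p]
  by (simp add: pmean_inv_1 pmean_inv_self)

lemma pmean_inv_mem_greaterThanLessThan: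
  assumes "1 < r" "x \<in> {1<..<r}"
  shows "pmean_inv r p x \<in> {0<..<1}"
  using assms strict_mono_onD[OF pmean_inv_strict_mono[OF assms(1)], of 1 x p]
    strict_mono_onD[OF pmean_inv_strict_mono[OF assms(1)], of x r p]
  by (simp add: pmean_inv_1 pmean_inv_self)

section \<open>The transfer map between two power means\<close>

definition pmean_transfer :: "real \<Rightarrow> real \<Rightarrow> real \<Rightarrow> real \<Rightarrow> real" where
  "pmean_transfer r p q x = pmean r q (pmean_inv r p x)"

lemma pmean_transfer_1: "1 < r \<Longrightarrow> pmean_transfer r p q 1 = 1"
  by (simp add: pmean_transfer_def pmean_inv_1 pmean_0)

lemma pmean_transfer_self: "1 < r \<Longrightarrow> pmean_transfer r p q r = r"
  by (simp add: pmean_transfer_def pmean_inv_self pmean_1)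

lemma pmean_transfer_mem_atLeastAtMost:
  assumes "1 < r" "x \<in> {1..r}"
  shows "pmean_transfer r p q x \<in> {1..r}"
  unfolding pmean_transfer_def
  by (rule pmean_mem_atLeastAtMost[OF assms(1) pmean_inv_mem_atLeastAtMost[OF assms]])

lemma pmean_transfer_transfer:
  assumes "1 < r" "x \<in> {1..r}"
  shows "pmean_transfer r q p (pmean_transfer r p q x) = x"
  using assms pmean_inv_mem_atLeastAtMost[OF assms, of p]
  by (simp add: pmean_transfer_def pmean_inv_pmean pmean_pmean_inv)

lemma pmean_transfer_image:
  assumes "1 < r"
  shows "pmean_transfer r p q ` {1..r} = {1..r}"
proof
  show "pmean_transfer r p q ` {1..r} \<subseteq> {1..r}"
    using pmean_transfer_mem_atLeastAtMost[OF assms] by blast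
  show "{1..r} \<subseteq> pmean_transfer r p q ` {1..r}"
  proof
    fix u
    assume "u \<in> {1..r}"
    then have "u = pmean_transfer r p q (pmean_transfer r q p u)"
      using assms by (simp add: pmean_transfer_transfer)
    then show "u \<in> pmean_transfer r p q ` {1..r}"
      using assms \<open>u \<in> {1..r}\<close> pmean_transfer_mem_atLeastAtMost by blast
  qed
qed

lemma pmean_transfer_has_pos_derivative:
  assumes "1 < r" "x \<in> {1..r}"
  shows "\<exists>D>0. (pmean_transfer r p q has_real_derivative D) (at x)"
proof -
  obtain D1 where "0 < D1" "(pmean_inv r p has_real_derivative D1) (at x)"
    using pmean_inv_has_pos_derivative[OF assms(1), of x p] assms(2) by auto
  moreover obtain D2 where "0 < D2" "(pmean r q has_real_derivative D2) (at (pmean_inv r p x))"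
    using pmean_has_pos_derivative[OF assms(1), of "pmean_inv r p x" q]
      pmean_inv_mem_atLeastAtMost[OF assms, of p] by auto
  ultimately have "(pmean r q \<circ> pmean_inv r p has_real_derivative D2 * D1) (at x)" "0 < D2 * D1"
    by (auto intro: DERIV_chain)
  moreover have "pmean r q \<circ> pmean_inv r p = pmean_transfer r p q"
    by (simp add: pmean_transfer_def fun_eq_iff)
  ultimately show ?thesis
    by auto
qed

lemma less_pmean_transfer:
  assumes "1 < r" "p < q" "x \<in> {1<..<r}"
  shows "x < pmean_transfer r p q x"
proof -
  have "x = pmean r p (pmean_inv r p x)"
    using assms by (simp add: pmean_pmean_inv)
  also have "\<dots> < pmean r q (pmean_inv r p x)"
    using assms pmean_inv_mem_greaterThanLessThan[OF assms(1,3), of p]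
    by (intro pmean_less_pmean) auto
  finally show ?thesis
    by (simp add: pmean_transfer_def)
qed

lemma pmean_transfer_reflect:
  assumes "1 < r" "x \<in> {1..r}"
  shows "pmean_transfer r (- q) (- p) (r / pmean_transfer r p q x) = r / x"
  using assms pmean_inv_mem_atLeastAtMost[OF assms, of p]
  by (simp add: pmean_transfer_def pmean_inv_neg pmean_neg pmean_pmean_inv)

lemma pmean_transfer_rescale:
  assumes "1 < r" "q \<noteq> 0" "p \<noteq> q" "x \<in> {1..r}"
  shows "pmean_transfer (r powr ((q - p) / q)) (p * q / (p - q)) q (x powr ((q - p) / q))
       = pmean_transfer r p q x * x powr ((q - p) / q - 1)"
proof (cases "p = 0")
  case True
  then show ?thesis
    using assms by simp
next
  case False
  define c where "c = (q - p) / q"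
  define p' where "p' = p * q / (p - q)"
  define w where "w = pmean_inv r p x"
  define B where "B = 1 - w + w * r powr q"
  have "c * p' = - p" "c * q = q - p" "c - 1 = - (p / q)"
    using assms by (simp_all add: c_def p'_def field_simps)
  have "p' \<noteq> 0" "0 < x"
    using assms False by (auto simp: p'_def)
  have "r powr p \<noteq> 1"
    using mult_powr_minus_one_pos[OF assms(1) False] by auto
  have x_p: "x powr p = 1 - w + w * r powr p"
    unfolding w_def by (rule powr_eq_pmean_inv[OF assms(1) False])
  have "pmean_inv (r powr c) p' (x powr c) = w * r powr p / x powr p"
    using \<open>c * p' = - p\<close> \<open>p' \<noteq> 0\<close> \<open>0 < x\<close> \<open>r powr p \<noteq> 1\<close> assms False
    by (simp add: pmean_inv_def w_def powr_powr powr_minus field_simps)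
  moreover have "1 - w * r powr p / x powr p + w * r powr p / x powr p * (r powr c) powr q
      = B / x powr p"
  proof -
    have "(r powr c) powr q = r powr q / r powr p"
      using \<open>c * q = q - p\<close> by (simp add: powr_powr powr_diff)
    moreover have "1 - w * r powr p / x powr p + w * r powr p / x powr p * (r powr q / r powr p)
        = (x powr p - w * r powr p + w * r powr q) / x powr p"
      using \<open>0 < x\<close> assms by (simp add: field_simps)
    ultimately show ?thesis
      by (simp add: B_def x_p)
  qed
  ultimately have "pmean_transfer (r powr c) p' q (x powr c) = (B / x powr p) powr (1 / q)"
    using assms by (simp add: pmean_transfer_def pmean_def)
  also have "\<dots> = B powr (1 / q) / (x powr p) powr (1 / q)"
    by (rule powr_divide)
  also have "\<dots> = B powr (1 / q) * x powr (c - 1)"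
    using \<open>0 < x\<close> \<open>c - 1 = - (p / q)\<close> by (simp add: powr_powr powr_minus divide_inverse)
  also have "B powr (1 / q) = pmean_transfer r p q x"
    using assms by (simp add: pmean_transfer_def pmean_def B_def w_def)
  finally show ?thesis
    by (simp add: c_def p'_def)
qed

section \<open>Period integrals\<close>

definition period_integral :: "(real \<Rightarrow> real) \<Rightarrow> real \<Rightarrow> real" where
  "period_integral F r = integral {1..r} (\<lambda>x. 1 / sqrt ((F x)\<^sup>2 - x\<^sup>2))"

lemma integral_substitution_nonneg:
  fixes f g g' :: "real \<Rightarrow> real" and a b c d :: real
  assumes der: "\<And>x. x \<in> {a..b} \<Longrightarrow> (g has_field_derivative g' x) (at x within {a..b})"
    and inj: "inj_on g {a..b}" and img: "g ` {a..b} = {c..d}"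
    and nonneg: "\<And>y. y \<in> {c..d} \<Longrightarrow> 0 \<le> f y"
  shows "integral {c..d} f = integral {a..b} (\<lambda>x. \<bar>g' x\<bar> * f (g x))"
proof -
  have change: "((\<lambda>x. \<bar>g' x\<bar> * f (g x)) absolutely_integrable_on {a..b}
        \<and> integral {a..b} (\<lambda>x. \<bar>g' x\<bar> * f (g x)) = B)
      \<longleftrightarrow> (f absolutely_integrable_on {c..d} \<and> integral {c..d} f = B)" for B
    using has_absolute_integral_change_of_variables_1'[OF _ der inj, of f B] img by simp
  have nonneg': "0 \<le> \<bar>g' x\<bar> * f (g x)" if "x \<in> {a..b}" for x
  proof -
    have "g x \<in> {c..d}"
      using img that by blast
    then show ?thesis
      using nonneg by simp
  qed
  show ?thesis
  proof (cases "f absolutely_integrable_on {c..d}")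
    case True
    then show ?thesis
      using change[of "integral {c..d} f"] by auto
  next
    case False
    \<comment> \<open>for nonnegative integrands integrability and absolute integrability coincide\<close>
    then have "\<not> f integrable_on {c..d}"
      using nonnegative_absolutely_integrable_1 nonneg by blast
    moreover have "\<not> (\<lambda>x. \<bar>g' x\<bar> * f (g x)) integrable_on {a..b}"
      using False change nonnegative_absolutely_integrable_1 nonneg' by blast
    ultimately show ?thesis
      by (simp add: not_integrable_integral)
  qed
qed

lemma integral_eq_if_diff_has_integral_0:
  fixes f g :: "real \<Rightarrow> real"
  assumes "((\<lambda>x. f x - g x) has_integral 0) S"
  shows "integral S f = integral S g"
proof (cases "g integrable_on S")
  case True
  then have "((\<lambda>x. (f x - g x) + g x) has_integral 0 + integral S g) S"
    using assms by (intro has_integral_add) auto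
  then show ?thesis
    by (simp add: integral_unique)
next
  case False
  have "\<not> f integrable_on S"
  proof
    assume "f integrable_on S"
    moreover have "(\<lambda>x. f x - g x) integrable_on S"
      using assms by blast
    ultimately have "(\<lambda>x. f x - (f x - g x)) integrable_on S"
      by (rule integrable_diff)
    then show False
      using False by simp
  qed
  then show ?thesis
    using False by (simp add: not_integrable_integral)
qed

lemma period_integral_substitution:
  fixes g g' G :: "real \<Rightarrow> real"
  assumes "\<And>x. x \<in> {a..b} \<Longrightarrow> (g has_field_derivative g' x) (at x within {a..b})"
    and "inj_on g {a..b}" "g ` {a..b} = {1..r}"
    and "\<And>x. x \<in> {a..b} \<Longrightarrow> g x \<le> G (g x)"
  shows "period_integral G r = integral {a..b} (\<lambda>x. \<bar>g' x\<bar> / sqrt ((G (g x))\<^sup>2 - (g x)\<^sup>2))"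
proof -
  have "0 \<le> 1 / sqrt ((G u)\<^sup>2 - u\<^sup>2)" if "u \<in> {1..r}" for u
  proof -
    have "u \<in> g ` {a..b}"
      using that assms(3) by simp
    then have "u \<le> G u"
      using assms(4) by blast
    then show ?thesis
      using that by (simp add: power_mono)
  qed
  then show ?thesis
    unfolding period_integral_def using integral_substitution_nonneg[OF assms(1-3)] by simp
qed

lemma image_powr_atLeastAtMost:
  fixes c r :: real
  assumes "0 < c" "1 \<le> r"
  shows "(\<lambda>x. x powr c) ` {1..r} = {1..r powr c}"
proof
  show "(\<lambda>x. x powr c) ` {1..r} \<subseteq> {1..r powr c}"
  proof
    fix u
    assume "u \<in> (\<lambda>x. x powr c) ` {1..r}"
    then obtain x where "x \<in> {1..r}" "u = x powr c"
      by blast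
    then show "u \<in> {1..r powr c}"
      using \<open>0 < c\<close> ge_one_powr_ge_zero[of x c] powr_mono2[of c x r] by auto
  qed
  show "{1..r powr c} \<subseteq> (\<lambda>x. x powr c) ` {1..r}"
  proof
    fix u
    assume u: "u \<in> {1..r powr c}"
    then have "u powr (1 / c) \<in> {1..r}"
      using assms powr_mono2[of "1 / c" u "r powr c"] by (auto simp: powr_powr ge_one_powr_ge_zero)
    moreover have "u = (u powr (1 / c)) powr c"
      using u \<open>0 < c\<close> by (simp add: powr_powr)
    ultimately show "u \<in> (\<lambda>x. x powr c) ` {1..r}"
      by blast
  qed
qed

lemma image_divide_atLeastAtMost:
  fixes r :: real
  assumes "1 \<le> r"
  shows "(\<lambda>y. r / y) ` {1..r} = {1..r}"
proof
  show "(\<lambda>y. r / y) ` {1..r} \<subseteq> {1..r}"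
    using assms by (auto simp: field_simps)
  show "{1..r} \<subseteq> (\<lambda>y. r / y) ` {1..r}"
  proof
    fix u
    assume "u \<in> {1..r}"
    then have "u = r / (r / u)" "r / u \<in> {1..r}"
      using assms by (auto simp: field_simps)
    then show "u \<in> (\<lambda>y. r / y) ` {1..r}"
      by blast
  qed
qed

lemma period_integral_powr_rescale:
  fixes F G :: "real \<Rightarrow> real"
  assumes "1 < r" "0 < c"
    and le: "\<And>x. x \<in> {1..r} \<Longrightarrow> x \<le> F x"
    and G: "\<And>x. x \<in> {1..r} \<Longrightarrow> G (x powr c) = F x * x powr (c - 1)"
  shows "period_integral G (r powr c) = c * period_integral F r"
proof -
  have der: "((\<lambda>x. x powr c) has_field_derivative c * x powr (c - 1)) (at x within {1..r})"
    if "x \<in> {1..r}" for x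
    using that by (auto intro!: derivative_eq_intros)
  have "strict_mono_on {1..r} (\<lambda>x. x powr c)"
    using \<open>0 < c\<close> by (intro strict_mono_onI powr_less_mono2) auto
  then have inj: "inj_on (\<lambda>x. x powr c) {1..r}"
    by (rule strict_mono_on_imp_inj_on)
  have img: "(\<lambda>x. x powr c) ` {1..r} = {1..r powr c}"
    using assms by (intro image_powr_atLeastAtMost) auto
  have x_powr: "x powr c = x * x powr (c - 1)" if "x \<in> {1..r}" for x
    using that by (simp add: powr_mult_base)
  have "x powr c \<le> G (x powr c)" if "x \<in> {1..r}" for x
    using le[OF that] G[OF that] x_powr[OF that] by (simp add: mult_right_mono)
  then have "period_integral G (r powr c)
      = integral {1..r} (\<lambda>x. \<bar>c * x powr (c - 1)\<bar> / sqrt ((G (x powr c))\<^sup>2 - (x powr c)\<^sup>2))"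
    using period_integral_substitution[OF der inj img] by blast
  also have "\<dots> = integral {1..r} (\<lambda>x. c * (1 / sqrt ((F x)\<^sup>2 - x\<^sup>2)))"
  proof (rule integral_cong)
    fix x
    assume x: "x \<in> {1..r}"
    have "(G (x powr c))\<^sup>2 - (x powr c)\<^sup>2 = (x powr (c - 1))\<^sup>2 * ((F x)\<^sup>2 - x\<^sup>2)"
      unfolding G[OF x] by (simp add: x_powr[OF x] power2_eq_square algebra_simps)
    then show "\<bar>c * x powr (c - 1)\<bar> / sqrt ((G (x powr c))\<^sup>2 - (x powr c)\<^sup>2)
        = c * (1 / sqrt ((F x)\<^sup>2 - x\<^sup>2))"
      using \<open>0 < c\<close> x by (simp add: real_sqrt_mult)
  qed
  also have "\<dots> = c * integral {1..r} (\<lambda>x. 1 / sqrt ((F x)\<^sup>2 - x\<^sup>2))"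
    by (rule integral_mult_right)
  finally show ?thesis
    unfolding period_integral_def .
qed

lemma reciprocal_substitution_integrand:
  fixes r x y d :: real
  assumes "0 < r" "0 < x" "0 < y" "0 \<le> d"
  shows "\<bar>- (r * d / y\<^sup>2)\<bar> / sqrt ((r / x)\<^sup>2 - (r / y)\<^sup>2) = x * d / (y * sqrt (y\<^sup>2 - x\<^sup>2))"
proof -
  have "(r / x)\<^sup>2 - (r / y)\<^sup>2 = (r / (x * y))\<^sup>2 * (y\<^sup>2 - x\<^sup>2)"
    using assms by (simp add: field_simps)
  then have "sqrt ((r / x)\<^sup>2 - (r / y)\<^sup>2) = r / (x * y) * sqrt (y\<^sup>2 - x\<^sup>2)"
    using assms by (simp add: real_sqrt_mult)
  moreover have "\<bar>- (r * d / y\<^sup>2)\<bar> = r * d / y\<^sup>2"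
    using assms by simp
  ultimately show ?thesis
    using assms by (simp add: power2_eq_square)
qed

lemma period_integral_reflect_substitution:
  fixes F F' G :: "real \<Rightarrow> real"
  assumes "1 < r"
    and F: "\<And>x. x \<in> {1..r} \<Longrightarrow> (F has_real_derivative F' x) (at x)"
    and F'_nonneg: "\<And>x. x \<in> {1..r} \<Longrightarrow> 0 \<le> F' x"
    and img: "F ` {1..r} = {1..r}"
    and le: "\<And>x. x \<in> {1..r} \<Longrightarrow> x \<le> F x"
    and G: "\<And>x. x \<in> {1..r} \<Longrightarrow> G (r / F x) = r / x"
  shows "period_integral G r = integral {1..r} (\<lambda>x. x * F' x / (F x * sqrt ((F x)\<^sup>2 - x\<^sup>2)))"
proof -
  have F_pos: "0 < F x" if "x \<in> {1..r}" for x
    using le[OF that] that by auto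
  have der: "((\<lambda>x. r / F x) has_field_derivative - (r * F' x / (F x)\<^sup>2)) (at x within {1..r})"
    if "x \<in> {1..r}" for x
  proof -
    have "((\<lambda>x. r / F x) has_real_derivative (0 * F x - r * F' x) / (F x * F x)) (at x)"
      using F_pos[OF that] by (intro DERIV_divide DERIV_const F[OF that]) auto
    then show ?thesis
      by (simp add: power2_eq_square has_field_derivative_at_within)
  qed
  have inj: "inj_on (\<lambda>x. r / F x) {1..r}"
  proof (rule inj_onI)
    fix x y
    assume "x \<in> {1..r}" "y \<in> {1..r}" "r / F x = r / F y"
    then have "r / x = r / y"
      using G by metis
    then show "x = y"
      using \<open>1 < r\<close> by simp
  qed
  have "(\<lambda>x. r / F x) ` {1..r} = (\<lambda>y. r / y) ` F ` {1..r}"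
    by (simp only: image_image)
  then have img': "(\<lambda>x. r / F x) ` {1..r} = {1..r}"
    using \<open>1 < r\<close> by (simp add: img image_divide_atLeastAtMost)
  have "r / F x \<le> G (r / F x)" if "x \<in> {1..r}" for x
    using G[OF that] le[OF that] that \<open>1 < r\<close> by (simp add: frac_le)
  then have "period_integral G r
      = integral {1..r} (\<lambda>x. \<bar>- (r * F' x / (F x)\<^sup>2)\<bar> / sqrt ((G (r / F x))\<^sup>2 - (r / F x)\<^sup>2))"
    using period_integral_substitution[OF der inj img'] by blast
  also have "\<dots> = integral {1..r} (\<lambda>x. x * F' x / (F x * sqrt ((F x)\<^sup>2 - x\<^sup>2)))"
  proof (rule integral_cong)
    fix x
    assume x: "x \<in> {1..r}"
    then show "\<bar>- (r * F' x / (F x)\<^sup>2)\<bar> / sqrt ((G (r / F x))\<^sup>2 - (r / F x)\<^sup>2)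
        = x * F' x / (F x * sqrt ((F x)\<^sup>2 - x\<^sup>2))"
      using reciprocal_substitution_integrand[of r x "F x" "F' x"] G[OF x] F_pos[OF x]
        F'_nonneg[OF x] \<open>1 < r\<close> by simp
  qed
  finally show ?thesis .
qed

lemma has_real_derivative_arcsin_divide:
  fixes F :: "real \<Rightarrow> real"
  assumes "(F has_real_derivative F') (at x)" "0 < x" "x < F x"
  shows "((\<lambda>x. arcsin (x / F x)) has_real_derivative
      1 / sqrt ((F x)\<^sup>2 - x\<^sup>2) - x * F' / (F x * sqrt ((F x)\<^sup>2 - x\<^sup>2))) (at x)"
proof -
  define s where "s = sqrt ((F x)\<^sup>2 - x\<^sup>2)"
  have "0 < F x" "0 < s"
    using assms by (simp_all add: s_def power_strict_mono)
  have t: "- 1 < x / F x" "x / F x < 1"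
    using assms by (auto simp: field_simps)
  have "1 - (x / F x)\<^sup>2 = ((F x)\<^sup>2 - x\<^sup>2) / (F x)\<^sup>2"
    using \<open>0 < F x\<close> by (simp add: field_simps)
  then have sqrt_eq: "sqrt (1 - (x / F x)\<^sup>2) = s / F x"
    using \<open>0 < F x\<close> by (simp add: s_def real_sqrt_divide)
  have "((\<lambda>x. x / F x) has_real_derivative (1 * F x - x * F') / (F x * F x)) (at x)"
    using assms \<open>0 < F x\<close> by (intro DERIV_divide DERIV_ident) auto
  from DERIV_chain2[OF DERIV_arcsin[OF t] this]
  have "((\<lambda>x. arcsin (x / F x)) has_real_derivative
      inverse (s / F x) * ((1 * F x - x * F') / (F x * F x))) (at x)"
    unfolding sqrt_eq .
  moreover have "inverse (s / F x) * ((1 * F x - x * F') / (F x * F x)) = 1 / s - x * F' / (F x * s)"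
    using \<open>0 < F x\<close> \<open>0 < s\<close> by (simp add: field_simps)
  ultimately show ?thesis
    by (simp add: s_def)
qed

lemma period_integral_arcsin:
  fixes F F' :: "real \<Rightarrow> real"
  assumes "1 < r"
    and F: "\<And>x. x \<in> {1..r} \<Longrightarrow> (F has_real_derivative F' x) (at x)"
    and "F 1 = 1" "F r = r"
    and less: "\<And>x. x \<in> {1<..<r} \<Longrightarrow> x < F x"
  shows "period_integral F r = integral {1..r} (\<lambda>x. x * F' x / (F x * sqrt ((F x)\<^sup>2 - x\<^sup>2)))"
proof -
  have le: "x \<le> F x" if "x \<in> {1..r}" for x
    using that assms less_imp_le[OF less] by (cases "x = 1 \<or> x = r") auto
  have F_cont: "continuous_on {1..r} F"
    using F by (intro continuous_at_imp_continuous_on ballI DERIV_isCont) auto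
  have F_nonzero: "F x \<noteq> 0" if "x \<in> {1..r}" for x
    using le[OF that] that by auto
  have bounds: "- 1 \<le> x / F x \<and> x / F x \<le> 1" if "x \<in> {1..r}" for x
    using le[OF that] that by (auto simp: field_simps)
  have "continuous_on {1..r} (\<lambda>x. arcsin (x / F x))"
    by (intro continuous_on_arcsin continuous_on_divide continuous_on_id ballI F_cont F_nonzero bounds)
  moreover have "((\<lambda>x. arcsin (x / F x)) has_vector_derivative
      1 / sqrt ((F x)\<^sup>2 - x\<^sup>2) - x * F' x / (F x * sqrt ((F x)\<^sup>2 - x\<^sup>2))) (at x)"
    if "x \<in> {1<..<r}" for x
    using that F less
    by (simp add: has_real_derivative_iff_has_vector_derivative[symmetric] has_real_derivative_arcsin_divide)
  ultimately have "((\<lambda>x. 1 / sqrt ((F x)\<^sup>2 - x\<^sup>2) - x * F' x / (F x * sqrt ((F x)\<^sup>2 - x\<^sup>2)))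
      has_integral arcsin (r / F r) - arcsin (1 / F 1)) {1..r}"
    using \<open>1 < r\<close> by (intro fundamental_theorem_of_calculus_interior) auto
  then show ?thesis
    unfolding period_integral_def using assms by (intro integral_eq_if_diff_has_integral_0) simp
qed

lemma period_integral_reflect:
  fixes F F' G :: "real \<Rightarrow> real"
  assumes "1 < r"
    and "\<And>x. x \<in> {1..r} \<Longrightarrow> (F has_real_derivative F' x) (at x)"
    and "\<And>x. x \<in> {1..r} \<Longrightarrow> 0 \<le> F' x"
    and "F ` {1..r} = {1..r}"
    and "F 1 = 1" "F r = r"
    and less: "\<And>x. x \<in> {1<..<r} \<Longrightarrow> x < F x"
    and "\<And>x. x \<in> {1..r} \<Longrightarrow> G (r / F x) = r / x"
  shows "period_integral G r = period_integral F r"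
proof -
  have "x \<le> F x" if "x \<in> {1..r}" for x
    using that assms less_imp_le[OF less] by (cases "x = 1 \<or> x = r") auto
  then show ?thesis
    using assms period_integral_reflect_substitution[of r F F' G] period_integral_arcsin[of r F F']
    by simp
qed

lemma Theta_eq_period_integral:
  assumes "1 < r" "p \<noteq> 0 \<or> q \<noteq> 0"
  shows "Theta p q r = period_integral (pmean_transfer r p q) r"
proof -
  have sq: "(b powr a)\<^sup>2 = b powr (2 * a)" for a b :: real
    by (simp add: power2_eq_square powr_add[symmetric])
  consider "p = 0" "q \<noteq> 0" | "p \<noteq> 0" "q = 0" | "p \<noteq> 0" "q \<noteq> 0"
    using assms(2) by blast
  then show ?thesis
  proof cases
    case 1
    have "(1 + (r powr q - 1) / ln r * ln x) powr (2 / q) = (pmean_transfer r p q x)\<^sup>2" for x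
    proof -
      define w where "w = ln x / ln r"
      have base: "1 + (r powr q - 1) / ln r * ln x = 1 - w + w * r powr q"
        using assms(1) by (simp add: w_def field_simps)
      have "pmean_transfer r p q x = (1 - w + w * r powr q) powr (1 / q)"
        using 1 by (simp add: pmean_transfer_def pmean_def pmean_inv_def w_def)
      then show ?thesis
        unfolding base by (simp add: sq)
    qed
    then show ?thesis
      using 1 by (simp add: Theta_def period_integral_def)
  next
    case 2
    then have "r powr (2 * (x powr p - 1) / (r powr p - 1)) = (pmean_transfer r p q x)\<^sup>2" for x
      by (simp add: pmean_transfer_def pmean_def pmean_inv_def sq)
    then show ?thesis
      using 2 by (simp add: Theta_def period_integral_def)
  next
    case 3
    have "r powr p - 1 \<noteq> 0"
      using mult_powr_minus_one_pos[OF assms(1) \<open>p \<noteq> 0\<close>] by auto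
    then have "(r powr p - r powr q) / (r powr p - 1) + (r powr q - 1) / (r powr p - 1) * x powr p
        = 1 - pmean_inv r p x + pmean_inv r p x * r powr q" for x
      using 3 by (simp add: pmean_inv_def field_simps)
    then have "((r powr p - r powr q) / (r powr p - 1) + (r powr q - 1) / (r powr p - 1) * x powr p)
        powr (2 / q) = (pmean_transfer r p q x)\<^sup>2" for x
      using 3 by (simp add: pmean_transfer_def pmean_def sq)
    then show ?thesis
      using 3 by (simp add: Theta_def period_integral_def)
  qed
qed

lemma Theta_reflect:
  assumes "1 < r" "p < q"
  shows "Theta (- q) (- p) r = Theta p q r"
proof -
  define F where "F = pmean_transfer r p q"
  have "(F has_real_derivative deriv F x) (at x)" "0 < deriv F x" if "x \<in> {1..r}" for x
    using pmean_transfer_has_pos_derivative[OF assms(1) that, of p q]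
    by (auto simp: F_def DERIV_imp_deriv)
  then have "period_integral (pmean_transfer r (- q) (- p)) r = period_integral F r"
    using assms
    by (intro period_integral_reflect[where F' = "deriv F"])
      (auto simp: F_def pmean_transfer_image pmean_transfer_1 pmean_transfer_self
        less_pmean_transfer pmean_transfer_reflect less_imp_le)
  then show ?thesis
    using assms by (simp add: Theta_eq_period_integral F_def)
qed

lemma Theta_rescale_lower:
  assumes "1 < r" "p < q" "0 < q"
  shows "Theta (p * q / (p - q)) q (r powr ((q - p) / q)) = (q - p) / q * Theta p q r"
proof -
  define c where "c = (q - p) / q"
  have "0 < c"
    using assms by (simp add: c_def)
  have "x \<le> pmean_transfer r p q x" if "x \<in> {1..r}" for x
    using that assms less_pmean_transfer[OF assms(1,2), of x] pmean_transfer_1 pmean_transfer_self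
    by (cases "x = 1 \<or> x = r") (auto simp: less_imp_le)
  then have "period_integral (pmean_transfer (r powr c) (p * q / (p - q)) q) (r powr c)
      = c * period_integral (pmean_transfer r p q) r"
    using assms \<open>0 < c\<close> pmean_transfer_rescale[OF assms(1), of q p]
    by (intro period_integral_powr_rescale) (auto simp: c_def)
  then show ?thesis
    using assms \<open>0 < c\<close> by (simp add: Theta_eq_period_integral c_def)
qed

lemma Theta_rescale_upper:
  assumes "1 < r" "p < q" "p < 0"
  shows "Theta p (p * q / (q - p)) (r powr ((p - q) / p)) = (p - q) / p * Theta p q r"
proof -
  define q' where "q' = p * q / (q - p)"
  define r' where "r' = r powr ((p - q) / p)"
  have "1 < r'"
    using assms by (simp add: r'_def divide_neg_neg)
  have "p * (q - p) < p * q"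
    using assms mult_neg_neg[of p p] by (simp add: algebra_simps)
  then have "p < q'"
    using assms by (simp add: q'_def pos_less_divide_eq)
  have "(- q) * (- p) / (- q - - p) = - q'" "(- p - - q) / - p = (p - q) / p"
    using assms by (simp_all add: q'_def field_simps)
  then have "Theta (- q') (- p) r' = (p - q) / p * Theta (- q) (- p) r"
    using Theta_rescale_lower[of r "- q" "- p"] assms by (simp add: r'_def)
  then show ?thesis
    using Theta_reflect[OF \<open>1 < r'\<close> \<open>p < q'\<close>] Theta_reflect[OF assms(1,2)]
    by (simp add: q'_def r'_def)
qed

theorem theorem4p1:
  fixes p q r :: real
  assumes "r > 1" and "p < q"
  shows "(q > 0 \<longrightarrow>
            Theta (p * q / (p - q)) q (r powr ((q - p) / q)) = (q - p) / q * Theta p q r)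
       \<and> (p < 0 \<longrightarrow>
            Theta p (p * q / (q - p)) (r powr ((p - q) / p)) = (p - q) / p * Theta p q r)
       \<and> Theta (- q) (- p) r = Theta p q r"
  using assms Theta_rescale_lower Theta_rescale_upper Theta_reflect by blast

end
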